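(* If $G$ is a simple graph of order $n\geq 3$ with minimum degree $\delta(G)\geq \frac{n}{2}$, then $px_k(G)=2$ for each integer $k$ with $3\leq k\leq n$.
   Context: All graphs are finite, simple, undirected and connected. An edge-coloring of a graph assigns a color to each edge (adjacent edges may receive the same color). A tree in an edge-colored graph is proper if any two adjacent edges of the tree receive different colors. For $S\subseteq V(G)$, an $S$-tree is a subgraph of $G$ that is a tree containing all vertices of $S$. For a connected graph $G$ of order $n$ and an integer $k$ with $2\le k\le n$, an edge-coloring of $G$ is a $k$-proper coloring if for every set $S$ of $k$ vertices of $G$ there exists a proper $S$-tree in $G$. The $k$-proper index $px_k(G)$ is the minimum number of colors used in a $k$-proper coloring of $G$. *)

theory Defs
  imports Main
begin

definition simple_graph :: "'a set \<Rightarrow> 'a set set \<Rightarrow> bool" where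
  "simple_graph V E \<longleftrightarrow> finite V \<and> (\<forall>e\<in>E. e \<subseteq> V \<and> card e = 2)"

definition degree :: "'a set set \<Rightarrow> 'a \<Rightarrow> nat" where
  "degree E v = card {e\<in>E. v \<in> e}"

definition adj_rel :: "'a set set \<Rightarrow> ('a \<times> 'a) set" where
  "adj_rel T = {(x, y). {x, y} \<in> T}"

definition connected_on :: "'a set \<Rightarrow> 'a set set \<Rightarrow> bool" where
  "connected_on W T \<longleftrightarrow> (\<forall>x\<in>W. \<forall>y\<in>W. (x, y) \<in> (adj_rel T)\<^sup>*)"

text \<open>A tree with vertex set W and edge set T: nonempty, connected, acyclic
  (acyclic = no edge lies on a cycle, i.e. removing any edge separates its endpoints).\<close>
definition is_tree :: "'a set \<Rightarrow> 'a set set \<Rightarrow> bool" where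
  "is_tree W T \<longleftrightarrow> finite W \<and> W \<noteq> {} \<and> (\<forall>e\<in>T. e \<subseteq> W \<and> card e = 2)
     \<and> connected_on W T
     \<and> (\<forall>e\<in>T. \<forall>x y. e = {x, y} \<longrightarrow> (x, y) \<notin> (adj_rel (T - {e}))\<^sup>*)"

definition proper_edges :: "('a set \<Rightarrow> 'c) \<Rightarrow> 'a set set \<Rightarrow> bool" where
  "proper_edges c T \<longleftrightarrow> (\<forall>e\<in>T. \<forall>f\<in>T. e \<noteq> f \<and> e \<inter> f \<noteq> {} \<longrightarrow> c e \<noteq> c f)"

definition k_proper_coloring :: "'a set \<Rightarrow> 'a set set \<Rightarrow> nat \<Rightarrow> ('a set \<Rightarrow> nat) \<Rightarrow> bool" where
  "k_proper_coloring V E k c \<longleftrightarrow>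
     (\<forall>S. S \<subseteq> V \<and> card S = k \<longrightarrow>
        (\<exists>W T. W \<subseteq> V \<and> T \<subseteq> E \<and> is_tree W T \<and> S \<subseteq> W \<and> proper_edges c T))"

definition px :: "'a set \<Rightarrow> 'a set set \<Rightarrow> nat \<Rightarrow> nat" where
  "px V E k = (LEAST m. \<exists>c. k_proper_coloring V E k c \<and> card (c ` E) = m)"

end

(* Dirac's argument gives a Hamiltonian path: the endpoints of a longest path have all their
   neighbours on it, and since each has degree at least n/2 there is a crossing pair of chords
   turning the path into a cycle on the same vertices; a vertex off that cycle would have a
   neighbour on it and so yield a longer path.  Colouring the edges of a Hamiltonian path
   alternately gives a proper spanning tree with two colours, which serves every k.  Conversely,
   with a single colour a proper tree is a matching and so has at most two vertices, which is
   too few for k >= 3. *)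

theory Submission
  imports Defs
begin

definition neighbours :: "'a set set \<Rightarrow> 'a \<Rightarrow> 'a set" where
  "neighbours E v = {u. {v, u} \<in> E}"

definition is_path :: "'a set set \<Rightarrow> 'a list \<Rightarrow> bool" where
  "is_path E p \<longleftrightarrow> distinct p \<and> successively (\<lambda>x y. {x, y} \<in> E) p"

definition is_cycle :: "'a set set \<Rightarrow> 'a list \<Rightarrow> bool" where
  "is_cycle E c \<longleftrightarrow> is_path E c \<and> {last c, hd c} \<in> E"

definition is_longest_path :: "'a set \<Rightarrow> 'a set set \<Rightarrow> 'a list \<Rightarrow> bool" where
  "is_longest_path V E p \<longleftrightarrow> is_path E p \<and> set p \<subseteq> V \<and>
     (\<forall>q. is_path E q \<and> set q \<subseteq> V \<longrightarrow> length q \<le> length p)"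

lemma neq_if_card_doubleton: "card {x, y} = 2 \<Longrightarrow> x \<noteq> y"
  by auto

lemma simple_graph_edge_distinct:
  assumes "simple_graph V E" "{x, y} \<in> E"
  shows "x \<noteq> y"
  using assms unfolding simple_graph_def by fastforce

lemma neighbours_subset:
  assumes "simple_graph V E"
  shows "neighbours E v \<subseteq> V"
  using assms unfolding simple_graph_def neighbours_def by blast

lemma not_in_neighbours:
  assumes "simple_graph V E"
  shows "v \<notin> neighbours E v"
  using simple_graph_edge_distinct[OF assms] unfolding neighbours_def by blast

lemma degree_eq_card_neighbours:
  assumes "simple_graph V E"
  shows "degree E v = card (neighbours E v)"
proof -
  have "{e \<in> E. v \<in> e} = (\<lambda>u. {v, u}) ` neighbours E v"
  proof
    show "{e \<in> E. v \<in> e} \<subseteq> (\<lambda>u. {v, u}) ` neighbours E v"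
    proof
      fix e assume e: "e \<in> {e \<in> E. v \<in> e}"
      then obtain x y where "e = {x, y}"
        using assms unfolding simple_graph_def by (auto simp: card_2_iff)
      with e have "e = {v, x} \<or> e = {v, y}" by auto
      with e show "e \<in> (\<lambda>u. {v, u}) ` neighbours E v" unfolding neighbours_def by auto
    qed
  qed (auto simp: neighbours_def)
  moreover have "inj_on (\<lambda>u. {v, u}) (neighbours E v)"
    using not_in_neighbours[OF assms] by (auto simp: inj_on_def doubleton_eq_iff)
  ultimately show ?thesis unfolding degree_def by (simp add: card_image)
qed

lemma Int_nonempty_if_card_sum_gt:
  assumes "finite X" "A \<subseteq> X" "B \<subseteq> X" "card X < card A + card B"
  shows "A \<inter> B \<noteq> {}"
proof
  assume "A \<inter> B = {}"
  then have "card A + card B = card (A \<union> B)"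
    using assms(1-3) by (simp add: card_Un_disjoint finite_subset)
  also have "\<dots> \<le> card X" using assms(1-3) by (simp add: card_mono)
  finally show False using assms(4) by simp
qed

lemma is_path_rev [simp]: "is_path E (rev p) \<longleftrightarrow> is_path E p"
  unfolding is_path_def by (simp add: insert_commute)

lemma is_path_Cons:
  "is_path E (x # p) \<longleftrightarrow> x \<notin> set p \<and> is_path E p \<and> (p = [] \<or> {x, hd p} \<in> E)"
  unfolding is_path_def by (auto simp: successively_Cons)

lemma is_path_append:
  "is_path E (xs @ ys) \<longleftrightarrow> is_path E xs \<and> is_path E ys \<and> set xs \<inter> set ys = {} \<and>
     (xs = [] \<or> ys = [] \<or> {last xs, hd ys} \<in> E)"
  unfolding is_path_def successively_append_iff by auto

lemma longest_path_neighbours_hd: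
  assumes "simple_graph V E" "is_longest_path V E p" "p \<noteq> []"
  shows "neighbours E (hd p) \<subseteq> set p"
proof
  fix x assume x: "x \<in> neighbours E (hd p)"
  show "x \<in> set p"
  proof (rule ccontr)
    assume "x \<notin> set p"
    moreover have "{x, hd p} \<in> E" using x unfolding neighbours_def by (simp add: insert_commute)
    ultimately have "is_path E (x # p)" using assms(2) unfolding is_longest_path_def is_path_Cons by blast
    moreover have "set (x # p) \<subseteq> V" using x neighbours_subset[OF assms(1)] assms(2)
      unfolding is_longest_path_def by auto
    ultimately show False using assms(2) unfolding is_longest_path_def by fastforce
  qed
qed

lemma longest_path_neighbours_last:
  assumes "simple_graph V E" "is_longest_path V E p" "p \<noteq> []"
  shows "neighbours E (last p) \<subseteq> set p"
proof -
  have "is_longest_path V E (rev p)" using assms(2) unfolding is_longest_path_def by simp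
  then show ?thesis using longest_path_neighbours_hd[OF assms(1), of "rev p"] assms(3)
    by (simp add: hd_rev)
qed

lemma path_crossing_chords:
  assumes "simple_graph V E" "is_path E p" "length p = Suc m"
    and N0: "neighbours E (p ! 0) \<subseteq> set p" and Nm: "neighbours E (p ! m) \<subseteq> set p"
    and deg: "m < card (neighbours E (p ! 0)) + card (neighbours E (p ! m))"
  obtains i where "i < m" "{p ! 0, p ! Suc i} \<in> E" "{p ! i, p ! m} \<in> E"
proof -
  define A where "A = {i. i < m \<and> {p ! 0, p ! Suc i} \<in> E}"
  define B where "B = {i. i < m \<and> {p ! i, p ! m} \<in> E}"
  have A_fin: "finite A" and B_fin: "finite B" unfolding A_def B_def by simp_all
  have "neighbours E (p ! 0) \<subseteq> (\<lambda>i. p ! Suc i) ` A"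
  proof
    fix x assume x: "x \<in> neighbours E (p ! 0)"
    then obtain j where j: "j < Suc m" "x = p ! j" using N0 assms(3) by (metis in_set_conv_nth subsetD)
    have "j \<noteq> 0" using j(2) x not_in_neighbours[OF assms(1), of "p ! 0"] by (cases j) auto
    then obtain i where "j = Suc i" using not0_implies_Suc by blast
    then show "x \<in> (\<lambda>i. p ! Suc i) ` A" using j x unfolding A_def neighbours_def by auto
  qed
  then have A: "card (neighbours E (p ! 0)) \<le> card A"
    using card_mono card_image_le finite_imageI A_fin le_trans by metis
  have "neighbours E (p ! m) \<subseteq> (\<lambda>i. p ! i) ` B"
  proof
    fix x assume x: "x \<in> neighbours E (p ! m)"
    then obtain j where j: "j < Suc m" "x = p ! j" using Nm assms(3) by (metis in_set_conv_nth subsetD)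
    have "j \<noteq> m" using j x not_in_neighbours[OF assms(1)] by auto
    then show "x \<in> (\<lambda>i. p ! i) ` B" using j x unfolding B_def neighbours_def by (auto simp: insert_commute)
  qed
  then have B: "card (neighbours E (p ! m)) \<le> card B"
    using card_mono card_image_le finite_imageI B_fin le_trans by metis
  have "A \<inter> B \<noteq> {}"
    by (rule Int_nonempty_if_card_sum_gt[of "{..<m}"]) (use A B deg in \<open>auto simp: A_def B_def\<close>)
  then show ?thesis using that unfolding A_def B_def by blast
qed

lemma path_rotation_cycle:
  assumes "is_path E p" "length p = Suc m" "i < m"
    and "{p ! 0, p ! Suc i} \<in> E" "{p ! i, p ! m} \<in> E"
  shows "is_cycle E (take (Suc i) p @ rev (drop (Suc i) p))"
proof -
  have "is_path E (take (Suc i) p @ drop (Suc i) p)" using assms(1) by simp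
  then have "is_path E (take (Suc i) p)" "is_path E (rev (drop (Suc i) p))"
    "set (take (Suc i) p) \<inter> set (rev (drop (Suc i) p)) = {}"
    unfolding is_path_append by auto
  moreover have "last (take (Suc i) p) = p ! i" using assms(2,3) by (simp add: take_Suc_conv_app_nth)
  moreover have "hd (rev (drop (Suc i) p)) = p ! m" using assms(2,3) by (simp add: hd_rev last_conv_nth)
  moreover have "last (take (Suc i) p @ rev (drop (Suc i) p)) = p ! Suc i" using assms(2,3)
    by (simp add: last_rev hd_drop_conv_nth)
  moreover have "hd (take (Suc i) p @ rev (drop (Suc i) p)) = p ! 0" using assms(2) by (cases p) auto
  ultimately show ?thesis using assms(2-5) unfolding is_cycle_def is_path_append
    by (auto simp: insert_commute)
qed

lemma cycle_extend_path:
  assumes "is_cycle E c" "w \<in> set c" "u \<notin> set c" "{u, w} \<in> E"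
  shows "\<exists>q. is_path E q \<and> set q = insert u (set c)"
proof -
  obtain xs ys where c: "c = xs @ w # ys" using assms(2) by (meson split_list)
  have "is_path E (w # ys)" "is_path E xs" "set (w # ys) \<inter> set xs = {}"
    using assms(1) unfolding c is_cycle_def is_path_append by auto
  moreover have "xs \<noteq> [] \<Longrightarrow> {last (w # ys), hd xs} \<in> E"
    using assms(1) unfolding c is_cycle_def by (cases ys) auto
  ultimately have "is_path E ((w # ys) @ xs)" unfolding is_path_append by auto
  then have "is_path E (u # (w # ys) @ xs)" using assms(3,4) unfolding c is_path_Cons by auto
  then show ?thesis unfolding c by auto
qed

lemma path_length_le_card:
  assumes "finite V" "is_path E p" "set p \<subseteq> V"
  shows "length p \<le> card V"
  using assms by (metis card_mono distinct_card is_path_def)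

lemma longest_path_cycle:
  assumes G: "simple_graph V E" and p: "is_longest_path V E p" "p \<noteq> []"
    and deg: "\<And>v. v \<in> V \<Longrightarrow> card V \<le> 2 * card (neighbours E v)"
  shows "\<exists>c. is_cycle E c \<and> set c = set p"
proof -
  obtain m where m: "length p = Suc m" using p(2) by (cases p) auto
  have path: "is_path E p" and pV: "set p \<subseteq> V" using p(1) unfolding is_longest_path_def by auto
  have "hd p = p ! 0" "last p = p ! m" using m p(2) by (simp_all add: hd_conv_nth last_conv_nth)
  then have N0: "neighbours E (p ! 0) \<subseteq> set p" and Nm: "neighbours E (p ! m) \<subseteq> set p"
    using longest_path_neighbours_hd[OF G p] longest_path_neighbours_last[OF G p] by simp_all
  have "length p \<le> card V"
    using path_length_le_card[OF _ path pV] G unfolding simple_graph_def by blast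
  moreover have "p ! 0 \<in> V" "p ! m \<in> V" using m pV by auto
  ultimately have "m < card (neighbours E (p ! 0)) + card (neighbours E (p ! m))"
    using deg[of "p ! 0"] deg[of "p ! m"] m by linarith
  then obtain i where "i < m" "{p ! 0, p ! Suc i} \<in> E" "{p ! i, p ! m} \<in> E"
    using path_crossing_chords[OF G path m N0 Nm] by blast
  then have "is_cycle E (take (Suc i) p @ rev (drop (Suc i) p))"
    using path_rotation_cycle[OF path m] by blast
  moreover have "set (take (Suc i) p @ rev (drop (Suc i) p)) = set p"
    by (metis set_append set_rev append_take_drop_id)
  ultimately show ?thesis by blast
qed

lemma ex_longest_path:
  assumes "finite V" "V \<noteq> {}"
  obtains p where "is_longest_path V E p" "p \<noteq> []"
proof -
  obtain v where v: "v \<in> V" using assms(2) by blast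
  have v_path: "is_path E [v] \<and> set [v] \<subseteq> V" using v unfolding is_path_def by simp
  then obtain p where p: "is_longest_path V E p"
    using ex_has_greatest_nat[of "\<lambda>q. is_path E q \<and> set q \<subseteq> V" "[v]" length "Suc (card V)"]
      path_length_le_card[OF assms(1)] unfolding is_longest_path_def by (metis less_Suc_eq_le)
  moreover have "length [v] \<le> length p" using p v_path unfolding is_longest_path_def by blast
  then have "p \<noteq> []" by auto
  ultimately show thesis by (rule that)
qed

lemma longest_path_spanning:
  assumes G: "simple_graph V E" and p: "is_longest_path V E p" "p \<noteq> []"
    and deg: "\<And>v. v \<in> V \<Longrightarrow> card V \<le> 2 * card (neighbours E v)"
  shows "set p = V"
proof (rule ccontr)
  have finV: "finite V" using G unfolding simple_graph_def by blast
  have path: "is_path E p" and pV: "set p \<subseteq> V"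
    and longest: "\<And>q. is_path E q \<Longrightarrow> set q \<subseteq> V \<Longrightarrow> length q \<le> length p"
    using p(1) unfolding is_longest_path_def by auto
  obtain c where c: "is_cycle E c" "set c = set p" using longest_path_cycle[OF G p deg] by blast
  assume "set p \<noteq> V"
  then obtain u where u: "u \<in> V" "u \<notin> set p" using pV by blast
  have "neighbours E (hd p) \<subseteq> set p - {hd p}"
    using longest_path_neighbours_hd[OF G p] not_in_neighbours[OF G] by blast
  then have "card (neighbours E (hd p)) < card (set p)"
    using p(2) by (metis List.finite_set card_Diff1_less card_mono finite_Diff hd_in_set le_less_trans)
  moreover have "hd p \<in> V" using pV p(2) by auto
  ultimately have "card (V - {u}) < card (neighbours E u) + card (set p)"
    using deg[of "hd p"] deg[OF u(1)] card_Diff_singleton[OF u(1)] by linarith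
  moreover have "neighbours E u \<subseteq> V - {u}" using neighbours_subset[OF G] not_in_neighbours[OF G] by blast
  ultimately have "neighbours E u \<inter> set p \<noteq> {}"
    using Int_nonempty_if_card_sum_gt[of "V - {u}"] finV pV u(2) by blast
  then obtain w where "w \<in> set c" "{u, w} \<in> E" using c(2) unfolding neighbours_def by blast
  then obtain q where q: "is_path E q" "set q = insert u (set p)"
    using cycle_extend_path[OF c(1)] u(2) c(2) by metis
  have "length q = Suc (length p)"
    using q path u(2) unfolding is_path_def by (metis distinct_card card_insert_disjoint List.finite_set)
  moreover have "set q \<subseteq> V" using q(2) pV u(1) by simp
  ultimately show False using longest[OF q(1)] by simp
qed

theorem dirac_hamiltonian_path:
  assumes G: "simple_graph V E" and "V \<noteq> {}"
    and deg: "\<And>v. v \<in> V \<Longrightarrow> card V \<le> 2 * card (neighbours E v)"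
  obtains p where "is_path E p" "set p = V"
proof -
  have "finite V" using G unfolding simple_graph_def by blast
  then obtain p where p: "is_longest_path V E p" "p \<noteq> []" using ex_longest_path \<open>V \<noteq> {}\<close> by blast
  then have "is_path E p" unfolding is_longest_path_def by blast
  moreover have "set p = V" by (rule longest_path_spanning[OF G p deg])
  ultimately show thesis by (rule that)
qed

definition path_edges :: "'a list \<Rightarrow> 'a set set" where
  "path_edges p = {{p ! i, p ! Suc i} | i. Suc i < length p}"

lemma path_edges_subset: "is_path E p \<Longrightarrow> path_edges p \<subseteq> E"
  unfolding is_path_def path_edges_def using successively_nth by fastforce

lemma adj_rel_rtrancl_sym: "(x, y) \<in> (adj_rel T)\<^sup>* \<Longrightarrow> (y, x) \<in> (adj_rel T)\<^sup>*"
proof -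
  have "sym (adj_rel T)" unfolding adj_rel_def sym_def by (simp add: insert_commute)
  then show "(x, y) \<in> (adj_rel T)\<^sup>* \<Longrightarrow> (y, x) \<in> (adj_rel T)\<^sup>*" by (metis sym_rtrancl symD)
qed

lemma connected_on_path_edges: "connected_on (set p) (path_edges p)"
proof -
  let ?R = "(adj_rel (path_edges p))\<^sup>*"
  have reach: "(p ! 0, p ! i) \<in> ?R" if "i < length p" for i
    using that
  proof (induction i)
    case (Suc i)
    then have "(p ! i, p ! Suc i) \<in> adj_rel (path_edges p)"
      unfolding adj_rel_def path_edges_def by auto
    with Suc show ?case by (meson Suc_lessD rtrancl.rtrancl_into_rtrancl)
  qed simp
  show ?thesis unfolding connected_on_def
  proof (intro ballI)
    fix x y assume "x \<in> set p" "y \<in> set p"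
    then obtain a b where "a < length p" "x = p ! a" "b < length p" "y = p ! b"
      by (metis in_set_conv_nth)
    then have "(p ! 0, x) \<in> ?R" "(p ! 0, y) \<in> ?R" using reach by simp_all
    then show "(x, y) \<in> ?R" by (metis adj_rel_rtrancl_sym rtrancl_trans)
  qed
qed

text \<open>Deleting the edge between positions i and i+1 leaves the prefix up to position i closed
  under adjacency, so the two ends of that edge are disconnected.\<close>
lemma path_edges_bridge:
  assumes "distinct p" "e \<in> path_edges p" "e = {x, y}"
  shows "(x, y) \<notin> (adj_rel (path_edges p - {e}))\<^sup>*"
proof -
  let ?R = "adj_rel (path_edges p - {e})"
  obtain i where i: "Suc i < length p" "e = {p ! i, p ! Suc i}"
    using assms(2) unfolding path_edges_def by blast
  have idx: "\<And>a b. a < length p \<Longrightarrow> b < length p \<Longrightarrow> p ! a = p ! b \<longleftrightarrow> a = b"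
    using assms(1) by (simp add: nth_eq_iff_index_eq)
  define X where "X = {p ! j | j. j \<le> i}"
  have "?R `` X \<subseteq> X"
  proof
    fix b assume "b \<in> ?R `` X"
    then obtain a k j where k: "Suc k < length p" "{a, b} = {p ! k, p ! Suc k}" "{a, b} \<noteq> e"
      and j: "j \<le> i" "a = p ! j"
      unfolding adj_rel_def path_edges_def X_def by blast
    have "k \<noteq> i" using k i by blast
    from k(2) have "a = p ! k \<and> b = p ! Suc k \<or> a = p ! Suc k \<and> b = p ! k"
      by (auto simp: doubleton_eq_iff)
    then show "b \<in> X"
    proof
      assume ab: "a = p ! k \<and> b = p ! Suc k"
      then have "j = k" using idx[of j k] j k i by simp
      then show "b \<in> X" using ab j \<open>k \<noteq> i\<close> unfolding X_def by (intro CollectI exI[of _ "Suc k"]) simp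
    next
      assume ab: "a = p ! Suc k \<and> b = p ! k"
      then have "j = Suc k" using idx[of j "Suc k"] j k i by simp
      then show "b \<in> X" using ab j unfolding X_def by (intro CollectI exI[of _ k]) simp
    qed
  qed
  then have closed: "?R\<^sup>* `` X = X" by (rule Image_closed_trancl)
  have "p ! i \<in> X" "p ! Suc i \<notin> X" using i idx unfolding X_def by auto
  then have no_path: "(p ! i, p ! Suc i) \<notin> ?R\<^sup>*" using closed by blast
  moreover have "(p ! Suc i, p ! i) \<notin> ?R\<^sup>*" using no_path adj_rel_rtrancl_sym by metis
  moreover have "(x, y) = (p ! i, p ! Suc i) \<or> (x, y) = (p ! Suc i, p ! i)"
    using assms(3) i(2) by (auto simp: doubleton_eq_iff)
  ultimately show ?thesis by blast
qed

lemma is_tree_path_edges: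
  assumes "distinct p" "p \<noteq> []"
  shows "is_tree (set p) (path_edges p)"
proof -
  have "e \<subseteq> set p \<and> card e = 2" if "e \<in> path_edges p" for e
    using that assms(1) unfolding path_edges_def by (auto simp: nth_eq_iff_index_eq)
  then show ?thesis unfolding is_tree_def
    using assms connected_on_path_edges path_edges_bridge[OF assms(1)] by auto
qed

definition alternating_coloring :: "'a list \<Rightarrow> 'a set \<Rightarrow> nat" where
  "alternating_coloring p e =
     (if \<exists>i. odd i \<and> Suc i < length p \<and> e = {p ! i, p ! Suc i} then 1 else 0)"

lemma alternating_coloring_nth:
  assumes "distinct p" "Suc i < length p"
  shows "alternating_coloring p {p ! i, p ! Suc i} = i mod 2"
proof -
  have "{p ! i, p ! Suc i} = {p ! j, p ! Suc j} \<longleftrightarrow> i = j" if "Suc j < length p" for j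
    using assms that by (auto simp: doubleton_eq_iff nth_eq_iff_index_eq)
  then have "(\<exists>j. odd j \<and> Suc j < length p \<and> {p ! i, p ! Suc i} = {p ! j, p ! Suc j}) \<longleftrightarrow> odd i"
    using assms(2) by blast
  then show ?thesis unfolding alternating_coloring_def by (simp add: odd_iff_mod_2_eq_one)
qed

lemma proper_edges_alternating_coloring:
  assumes "distinct p"
  shows "proper_edges (alternating_coloring p) (path_edges p)"
  unfolding proper_edges_def
proof (intro ballI impI)
  fix e f assume "e \<in> path_edges p" "f \<in> path_edges p" and ef: "e \<noteq> f \<and> e \<inter> f \<noteq> {}"
  then obtain i j where i: "Suc i < length p" "e = {p ! i, p ! Suc i}"
    and j: "Suc j < length p" "f = {p ! j, p ! Suc j}"
    unfolding path_edges_def by blast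
  have idx: "\<And>a b. a < length p \<Longrightarrow> b < length p \<Longrightarrow> p ! a = p ! b \<longleftrightarrow> a = b"
    using assms by (simp add: nth_eq_iff_index_eq)
  obtain z where "z \<in> e" "z \<in> f" using ef by blast
  then have "i = j \<or> j = Suc i \<or> i = Suc j" using i j idx by auto
  moreover have "i \<noteq> j" using ef i j by blast
  ultimately have "j = Suc i \<or> i = Suc j" by blast
  then show "alternating_coloring p e \<noteq> alternating_coloring p f"
    using alternating_coloring_nth[OF assms] i j by (auto simp: mod_Suc split: if_split_asm)
qed

lemma k_proper_coloring_alternating:
  assumes "is_path E p" "set p = V" "V \<noteq> {}"
  shows "k_proper_coloring V E k (alternating_coloring p)"
  unfolding k_proper_coloring_def
  using assms is_tree_path_edges path_edges_subset proper_edges_alternating_coloring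
  unfolding is_path_def by (metis set_empty subset_refl)

lemma alternating_coloring_image:
  assumes "is_path E p" "3 \<le> length p"
  shows "alternating_coloring p ` E = {0, 1}"
proof
  show "alternating_coloring p ` E \<subseteq> {0, 1}" unfolding alternating_coloring_def by auto
  have "{p ! 0, p ! 1} \<in> E" "{p ! 1, p ! 2} \<in> E"
    using assms path_edges_subset unfolding path_edges_def by (fastforce simp: numeral_2_eq_2)+
  moreover have "alternating_coloring p {p ! 0, p ! 1} = 0" "alternating_coloring p {p ! 1, p ! 2} = 1"
    using alternating_coloring_nth[of p 0] alternating_coloring_nth[of p 1] assms
    unfolding is_path_def by (simp_all add: numeral_2_eq_2)
  ultimately show "{0, 1} \<subseteq> alternating_coloring p ` E" by (metis image_eqI insert_subset empty_subsetI)
qed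

lemma matching_rtrancl_adj_rel:
  assumes "\<forall>e\<in>T. card e = 2" "pairwise disjnt T" "(x, y) \<in> (adj_rel T)\<^sup>*"
  shows "x = y \<or> {x, y} \<in> T"
  using assms(3)
proof (induction rule: rtrancl_induct)
  case (step y z)
  then have yz: "{y, z} \<in> T" by (simp add: adj_rel_def)
  then have "y \<noteq> z" using assms(1) neq_if_card_doubleton by metis
  show ?case
  proof (cases "x = y")
    case False
    then have "{x, y} \<in> T" using step by simp
    moreover have "\<not> disjnt {x, y} {y, z}" by (simp add: disjnt_def)
    ultimately have "{x, y} = {y, z}" using yz pairwiseD[OF assms(2)] by metis
    then show ?thesis using \<open>y \<noteq> z\<close> by (auto simp: doubleton_eq_iff)
  qed (use yz in simp)
qed simp

lemma card_le_2_if_tree_matching: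
  assumes "is_tree W T" "pairwise disjnt T"
  shows "card W \<le> 2"
proof (rule ccontr)
  assume "\<not> card W \<le> 2"
  then have "3 \<le> card W" by simp
  then obtain S where "S \<subseteq> W" "card S = 3" by (rule obtain_subset_with_card_n)
  then obtain a b c where abc: "{a, b, c} \<subseteq> W" "a \<noteq> b" "a \<noteq> c" "b \<noteq> c" by (auto simp: card_3_iff)
  have "(a, b) \<in> (adj_rel T)\<^sup>*" "(a, c) \<in> (adj_rel T)\<^sup>*"
    using assms(1) abc(1) unfolding is_tree_def connected_on_def by auto
  moreover have two: "\<forall>e\<in>T. card e = 2" using assms(1) unfolding is_tree_def by blast
  ultimately have "{a, b} \<in> T" "{a, c} \<in> T"
    using matching_rtrancl_adj_rel[OF two assms(2)] abc(2,3) by metis+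
  moreover have "{a, b} \<noteq> {a, c}" using abc by (auto simp: doubleton_eq_iff)
  ultimately have "disjnt {a, b} {a, c}" using pairwiseD[OF assms(2)] by metis
  then show False by (simp add: disjnt_def)
qed

lemma two_le_card_k_proper_coloring:
  assumes G: "simple_graph V E" and "3 \<le> k" "k \<le> card V" and c: "k_proper_coloring V E k c"
  shows "2 \<le> card (c ` E)"
proof (rule ccontr)
  assume "\<not> 2 \<le> card (c ` E)"
  moreover have "finite E" using G unfolding simple_graph_def by (meson Pow_iff finite_Pow_iff finite_subset subsetI)
  ultimately have const: "\<forall>e\<in>E. \<forall>f\<in>E. c e = c f" by (metis card_le_Suc0_iff_eq finite_imageI image_eqI not_less_eq_eq numeral_2_eq_2)
  obtain S where S: "S \<subseteq> V" "card S = k" using assms(3) by (meson obtain_subset_with_card_n)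
  then obtain W T where WT: "T \<subseteq> E" "is_tree W T" "S \<subseteq> W" "proper_edges c T"
    using c unfolding k_proper_coloring_def by auto
  have "pairwise disjnt T"
    using WT(1,4) const unfolding proper_edges_def pairwise_def disjnt_def by blast
  with WT(2) have "card W \<le> 2" by (rule card_le_2_if_tree_matching)
  moreover have "k \<le> card W" using S WT(2,3) unfolding is_tree_def by (metis card_mono)
  ultimately show False using assms(2) by linarith
qed

theorem mainTheorem7:
  fixes V :: "'a set" and E :: "'a set set" and k :: nat
  assumes "simple_graph V E"
    and "card V \<ge> 3"
    and "\<forall>v\<in>V. 2 * degree E v \<ge> card V"
    and "3 \<le> k" and "k \<le> card V"
  shows "px V E k = 2"
proof -
  have "V \<noteq> {}" using assms(2) by auto
  then obtain p where p: "is_path E p" "set p = V"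
    using dirac_hamiltonian_path[OF assms(1)] assms(3) degree_eq_card_neighbours[OF assms(1)] by metis
  then have "length p = card V" unfolding is_path_def by (metis distinct_card)
  then have "alternating_coloring p ` E = {0, 1}" using alternating_coloring_image[OF p(1)] assms(2) by simp
  then have "\<exists>c. k_proper_coloring V E k c \<and> card (c ` E) = 2"
    using k_proper_coloring_alternating[OF p \<open>V \<noteq> {}\<close>] by force
  then show ?thesis unfolding px_def
  proof (rule Least_equality)
    fix m assume "\<exists>c. k_proper_coloring V E k c \<and> card (c ` E) = m"
    then show "2 \<le> m" using two_le_card_k_proper_coloring[OF assms(1,4,5)] by blast
  qed
qed

end
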